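(* Let $n$ be a prime, let $\alpha$ be a primitive element of $\mathbb{F}_{2^n}$, identify $\mathbb{F}_2^n$ with $\mathbb{F}_{2^n}$ as $\mathbb{F}_2$-vector spaces, and let $k\ge 2$. If there exist $\frac{2^n-2}{(2^k-1)(2^k-2)n}$ pairwise disjoint coset complete $k$-dimensional subspaces of $\mathbb{F}_2^n$, then there exists a Steiner structure $\mathbb{S}_2[2,k,n]$.
   Context: For $s\in\mathbb{Z}_{2^n-1}$, the cyclotomic coset of $s$ is $C_s=\{s\cdot 2^i \bmod (2^n-1): 0\le i\le n-1\}$, and $\rho(s)$ denotes the smallest element of $C_s$ (its coset representative). For a $k$-dimensional subspace $X=\{0,\alpha^{i_1},\dots,\alpha^{i_{2^k-1}}\}$ of $\mathbb{F}_2^n$ (exponents in $\mathbb{Z}_{2^n-1}$), its coset difference set is $\rho(\Delta(X))=\{\rho(i_r-i_s): 1\le r,s\le 2^k-1,\ r\ne s\}$. $X$ is coset complete if $|\rho(\Delta(X))|=(2^k-1)(2^k-2)$; two coset complete subspaces $X,Y$ are disjoint coset complete if $\rho(\Delta(X))\cap\rho(\Delta(Y))=\varnothing$. A Steiner structure $\mathbb{S}_2[2,k,n]$ is a set of $k$-dimensional subspaces of $\mathbb{F}_2^n$ such that each $2$-dimensional subspace of $\mathbb{F}_2^n$ is contained in exactly one of them. *)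

theory Defs
  imports "HOL-Computational_Algebra.Primes" "HOL-Library.Cardinality"
begin

text \<open>The field F_{2^n} is modelled by a finite field type 'a with CARD('a) = 2^n and
characteristic 2. Viewed as an F_2-vector space, its subspaces are exactly the
subsets containing 0 and closed under addition; a subspace has F_2-dimension k
iff it has 2^k elements.\<close>

definition F2_subspace :: "'a::field set \<Rightarrow> bool" where
  "F2_subspace V \<longleftrightarrow> 0 \<in> V \<and> (\<forall>x\<in>V. \<forall>y\<in>V. x + y \<in> V)"

definition F2_subspace_dim :: "'a::field set \<Rightarrow> nat \<Rightarrow> bool" where
  "F2_subspace_dim V k \<longleftrightarrow> F2_subspace V \<and> finite V \<and> card V = 2 ^ k"

definition primitive_element :: "'a::field \<Rightarrow> bool" where
  "primitive_element \<alpha> \<longleftrightarrow> \<alpha> \<noteq> 0 \<and> (\<forall>x. x \<noteq> 0 \<longrightarrow> (\<exists>i::nat. \<alpha> ^ i = x))"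

definition dlog :: "nat \<Rightarrow> 'a::field \<Rightarrow> 'a \<Rightarrow> nat" where
  "dlog n \<alpha> x = (THE i. i < 2 ^ n - 1 \<and> \<alpha> ^ i = x)"

definition coset_rep :: "nat \<Rightarrow> nat \<Rightarrow> nat" where
  "coset_rep n s = Min {(s * 2 ^ i) mod (2 ^ n - 1) | i. i < n}"

definition coset_diff_set :: "nat \<Rightarrow> 'a::field \<Rightarrow> 'a set \<Rightarrow> nat set" where
  "coset_diff_set n \<alpha> X =
     {coset_rep n (nat ((int (dlog n \<alpha> a) - int (dlog n \<alpha> b)) mod int (2 ^ n - 1))) | a b.
        a \<in> X \<and> b \<in> X \<and> a \<noteq> 0 \<and> b \<noteq> 0 \<and> a \<noteq> b}"

definition coset_complete :: "nat \<Rightarrow> 'a::field \<Rightarrow> nat \<Rightarrow> 'a set \<Rightarrow> bool" where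
  "coset_complete n \<alpha> k X \<longleftrightarrow> card (coset_diff_set n \<alpha> X) = (2 ^ k - 1) * (2 ^ k - 2)"

definition steiner_structure :: "nat \<Rightarrow> 'a::field set set \<Rightarrow> bool" where
  "steiner_structure k S \<longleftrightarrow> (\<forall>X\<in>S. F2_subspace_dim X k) \<and>
     (\<forall>W. F2_subspace_dim W 2 \<longrightarrow> (\<exists>!X. X \<in> S \<and> W \<subseteq> X))"

end

theory Submission
  imports Defs
begin

text \<open>Let Q be the set of triples (X, (a, b), j) with X in the given family, (a, b) an ordered pair
of distinct nonzero elements of X and j < n. The map sending such a triple to (a/b)^(2^j) is
injective: the discrete logarithm of (a/b)^(2^j) is 2^j log(a/b), which has the same cyclotomic
coset representative as log(a/b), so disjointness recovers X and coset completeness recovers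
(a, b); finally, since n is prime, an element outside F_2 has n distinct Frobenius conjugates,
which recovers j. The counting hypothesis says |Q| = 2^n - 2, so the map is a bijection onto the
field minus {0, 1}. Hence the subspaces c X^(2^j) with c \<noteq> 0 and j < n form a Steiner structure: the
plane spanned by nonzero x \<noteq> y lies in c X^(2^j) exactly when (a/b)^(2^j) = y/x and c = x/b^(2^j)
for some distinct nonzero a, b in X.\<close>

lemma mult_pow2_mod_mersenne:
  assumes "n > 0"
  shows "(s * 2 ^ a) mod (2 ^ n - 1) = (s * 2 ^ (a mod n)) mod ((2::nat) ^ n - 1)"
proof -
  let ?N = "(2::nat) ^ n - 1"
  have "2 ^ n mod ?N = 1 mod ?N"
    by (metis mod_add_self1 add.commute le_add_diff_inverse one_le_power one_le_numeral)
  then have period: "(2 ^ n) ^ q mod ?N = 1 mod ?N" for q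
    by (metis power_mod power_one)
  have "s * 2 ^ a = s * 2 ^ (a mod n) * (2 ^ n) ^ (a div n)"
    by (metis mod_div_mult_eq mult.assoc mult.commute power_add power_mult)
  also have "\<dots> mod ?N = (s * 2 ^ (a mod n) * ((2 ^ n) ^ (a div n) mod ?N)) mod ?N"
    by (rule mod_mult_right_eq[symmetric])
  also have "\<dots> = (s * 2 ^ (a mod n) * (1 mod ?N)) mod ?N"
    by (simp only: period)
  finally show ?thesis
    by (metis mod_mult_right_eq mult_1_right)
qed

lemma coset_rep_mult_pow2:
  assumes "n > 0"
  shows "coset_rep n ((s * 2 ^ j) mod (2 ^ n - 1)) = coset_rep n s"
proof -
  let ?N = "(2::nat) ^ n - 1"
  have orbit: "{(t * 2 ^ i) mod ?N | i. i < n} = range (\<lambda>i. (t * 2 ^ i) mod ?N)" for t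
    using mult_pow2_mod_mersenne[OF assms, of t] assms by (auto intro: exI[of _ "_ mod n"])
  have shift: "((s * 2 ^ j) mod ?N * 2 ^ i) mod ?N = (s * 2 ^ (j + i)) mod ?N" for i
    by (simp add: mod_mult_left_eq power_add mult.assoc)
  have unshift: "(s * 2 ^ i) mod ?N = (s * 2 ^ (j + (i + (n - 1) * j))) mod ?N" for i
  proof -
    have "j + (i + (n - 1) * j) = i + n * j"
      using assms by (cases n) simp_all
    then have "(s * 2 ^ (j + (i + (n - 1) * j))) mod ?N = (s * 2 ^ ((i + n * j) mod n)) mod ?N"
      by (simp only: mult_pow2_mod_mersenne[OF assms, of s "i + n * j"])
    also have "\<dots> = (s * 2 ^ i) mod ?N"
      using mult_pow2_mod_mersenne[OF assms, of s i] by simp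
    finally show ?thesis
      by (rule sym)
  qed
  have "range (\<lambda>i. ((s * 2 ^ j) mod ?N * 2 ^ i) mod ?N) = range (\<lambda>i. (s * 2 ^ i) mod ?N)"
    unfolding shift using unshift by blast
  then show ?thesis
    unfolding coset_rep_def orbit by simp
qed

lemma gcd_mem_if_diff_closed:
  fixes P :: "nat \<Rightarrow> bool"
  assumes diff: "\<And>a b. b \<le> a \<Longrightarrow> P a \<Longrightarrow> P b \<Longrightarrow> P (a - b)" and "P a" "P b"
  shows "P (gcd a b)"
  using assms(2,3)
proof (induction "a + b" arbitrary: a b rule: less_induct)
  case less
  show ?case
  proof (cases "a = 0 \<or> b = 0")
    case True
    with less.prems show ?thesis
      by auto
  next
    case False
    show ?thesis
    proof (cases "b \<le> a")
      case True
      with False less have "P (gcd (a - b) b)"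
        by (intro less.hyps diff) auto
      with True show ?thesis
        by (simp add: gcd_diff1_nat)
    next
      case b_greater: False
      with False less have "P (gcd (b - a) a)"
        by (intro less.hyps diff) auto
      with b_greater show ?thesis
        by (simp add: gcd_diff1_nat gcd.commute[of b a])
    qed
  qed
qed

lemma char2_add_self:
  assumes "(1::'a::field) + 1 = 0"
  shows "x + x = (0::'a)"
  by (metis assms distrib_right mult_1 mult_zero_left)

lemma char2_pow2_add:
  assumes "(1::'a::field) + 1 = 0"
  shows "(a + b) ^ (2 ^ j) = a ^ (2 ^ j) + (b::'a) ^ (2 ^ j)"
proof (induction j)
  case (Suc j)
  have "(a + b) ^ (2 ^ Suc j) = (a ^ (2 ^ j) + b ^ (2 ^ j)) ^ 2"
    by (simp only: Suc power_Suc2 power_mult)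
  also have "\<dots> = (a ^ (2 ^ j)) ^ 2 + (b ^ (2 ^ j)) ^ 2"
    using char2_add_self[OF assms] by (simp add: power2_sum)
  also have "\<dots> = a ^ (2 ^ Suc j) + b ^ (2 ^ Suc j)"
    by (simp only: power_Suc2 power_mult)
  finally show ?case .
qed simp

lemma char2_pow2_inj:
  assumes "(1::'a::field) + 1 = 0" and "a ^ (2 ^ j) = (b::'a) ^ (2 ^ j)"
  shows "a = b"
proof -
  have "(a + b) ^ (2 ^ j) = 0"
    using assms by (simp add: char2_pow2_add char2_add_self)
  then have "a + b = b + b"
    using char2_add_self[OF assms(1)] by simp
  then show ?thesis
    by simp
qed

text \<open>For c = \<alpha>^i this is the block \<alpha>^i X^(2^j) of the paper's construction.\<close>

definition frobenius_twist :: "'a::field \<Rightarrow> nat \<Rightarrow> 'a set \<Rightarrow> 'a set" where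
  "frobenius_twist c j X = (\<lambda>z. c * z ^ (2 ^ j)) ` X"

lemma F2_subspace_dim_frobenius_twist:
  fixes c :: "'a::field"
  assumes char2: "(1::'a) + 1 = 0" and "c \<noteq> 0" and X: "F2_subspace_dim X k"
  shows "F2_subspace_dim (frobenius_twist c j X) k"
proof -
  have "inj_on (\<lambda>z. c * z ^ (2 ^ j)) X"
  proof (rule inj_onI)
    fix u v
    assume "c * u ^ (2 ^ j) = c * v ^ (2 ^ j)"
    with \<open>c \<noteq> 0\<close> have "u ^ (2 ^ j) = v ^ (2 ^ j)"
      by simp
    then show "u = v"
      by (rule char2_pow2_inj[OF char2])
  qed
  then have "card (frobenius_twist c j X) = card X"
    unfolding frobenius_twist_def by (rule card_image)
  moreover have "F2_subspace (frobenius_twist c j X)"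
    using X unfolding F2_subspace_dim_def F2_subspace_def frobenius_twist_def
    by (force simp: char2_pow2_add[OF char2] distrib_left[symmetric])
  ultimately show ?thesis
    using X unfolding F2_subspace_dim_def frobenius_twist_def by simp
qed

lemma F2_subspace_dim_2_spanned:
  fixes W :: "'a::field set"
  assumes char2: "(1::'a) + 1 = 0" and W: "F2_subspace_dim W 2"
  obtains x y where "x \<in> W" "y \<in> W" "x \<noteq> 0" "y \<noteq> 0" "x \<noteq> y"
    and "\<And>Y. F2_subspace Y \<Longrightarrow> x \<in> Y \<Longrightarrow> y \<in> Y \<Longrightarrow> W \<subseteq> Y"
proof -
  have "0 \<in> W" and W_add: "\<And>a b. a \<in> W \<Longrightarrow> b \<in> W \<Longrightarrow> a + b \<in> W"
    and "finite W" and "card W = 4"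
    using W unfolding F2_subspace_dim_def F2_subspace_def by auto
  then have "card (W - {0}) = 3"
    by simp
  then obtain x where x: "x \<in> W" "x \<noteq> 0"
    by (metis DiffE card.empty ex_in_conv singletonI zero_neq_numeral)
  with \<open>card (W - {0}) = 3\<close> have "card (W - {0} - {x}) = 2"
    by simp
  then obtain y where y: "y \<in> W" "y \<noteq> 0" "y \<noteq> x"
    by (metis DiffE card.empty ex_in_conv singletonI zero_neq_numeral)
  have "x + y \<noteq> 0"
    using y char2_add_self[OF char2, of y] by (metis add_right_cancel)
  then have "card {0, x, y, x + y} = 4"
    using x y by auto
  with \<open>card W = 4\<close> have "W = {0, x, y, x + y}"
    using \<open>0 \<in> W\<close> x y W_add \<open>finite W\<close> by (intro card_subset_eq[symmetric]) auto
  with x y show thesis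
    by (intro that[of x y]) (auto simp: F2_subspace_def)
qed

definition distinct_nonzero_pairs :: "'a::zero set \<Rightarrow> ('a \<times> 'a) set" where
  "distinct_nonzero_pairs X = {(a, b). a \<in> X \<and> b \<in> X \<and> a \<noteq> 0 \<and> b \<noteq> 0 \<and> a \<noteq> b}"

lemma card_distinct_nonzero_pairs:
  assumes "finite X" and "0 \<in> X"
  shows "card (distinct_nonzero_pairs X) = (card X - 1) * (card X - 2)"
proof -
  let ?X = "X - {0}"
  have "distinct_nonzero_pairs X = ?X \<times> ?X - (\<lambda>a. (a, a)) ` ?X"
    unfolding distinct_nonzero_pairs_def by auto
  moreover have "card ((\<lambda>a. (a, a)) ` ?X) = card ?X"
    by (simp add: card_image inj_on_def)
  ultimately have "card (distinct_nonzero_pairs X) = card ?X * card ?X - card ?X"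
    using assms by (simp add: card_Diff_subset card_cartesian_product image_subset_iff)
  also have "\<dots> = card ?X * (card ?X - 1)"
    by (simp add: diff_mult_distrib2)
  also have "\<dots> = (card X - 1) * (card X - 2)"
    using assms by (simp add: numeral_2_eq_2)
  finally show ?thesis .
qed

lemma pair_mem_frobenius_twist_iff:
  fixes c x y :: "'a::field"
  assumes char2: "(1::'a) + 1 = 0" and "c \<noteq> 0" "x \<noteq> 0" "y \<noteq> 0" "x \<noteq> y"
  shows "x \<in> frobenius_twist c j X \<and> y \<in> frobenius_twist c j X \<longleftrightarrow>
    (\<exists>(a, b)\<in>distinct_nonzero_pairs X. (a / b) ^ (2 ^ j) = y / x \<and> c = x / b ^ (2 ^ j))"
proof
  assume "x \<in> frobenius_twist c j X \<and> y \<in> frobenius_twist c j X"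
  then obtain a b where "a \<in> X" "b \<in> X" and a: "y = c * a ^ (2 ^ j)" and b: "x = c * b ^ (2 ^ j)"
    unfolding frobenius_twist_def by blast
  with assms have "(a, b) \<in> distinct_nonzero_pairs X"
    unfolding distinct_nonzero_pairs_def by auto
  moreover have "(a / b) ^ (2 ^ j) = y / x" and "c = x / b ^ (2 ^ j)"
    using a b assms by (simp_all add: power_divide)
  ultimately show "\<exists>(a, b)\<in>distinct_nonzero_pairs X. (a / b) ^ (2 ^ j) = y / x \<and> c = x / b ^ (2 ^ j)"
    by blast
next
  assume "\<exists>(a, b)\<in>distinct_nonzero_pairs X. (a / b) ^ (2 ^ j) = y / x \<and> c = x / b ^ (2 ^ j)"
  then obtain a b where "a \<in> X" "b \<in> X" "b \<noteq> 0"
    and ab: "(a / b) ^ (2 ^ j) = y / x" and c: "c = x / b ^ (2 ^ j)"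
    unfolding distinct_nonzero_pairs_def by blast
  then have "x = c * b ^ (2 ^ j)"
    by simp
  have "y = x * (a / b) ^ (2 ^ j)"
    using ab \<open>x \<noteq> 0\<close> by simp
  also have "\<dots> = c * a ^ (2 ^ j)"
    using c \<open>b \<noteq> 0\<close> by (simp add: power_divide)
  finally have "y = c * a ^ (2 ^ j)" .
  with \<open>a \<in> X\<close> \<open>b \<in> X\<close> \<open>x = c * b ^ (2 ^ j)\<close> show "x \<in> frobenius_twist c j X \<and> y \<in> frobenius_twist c j X"
    unfolding frobenius_twist_def by blast
qed

lemma steiner_structure_frobenius_twists:
  fixes S :: "'a::field set set"
  assumes char2: "(1::'a) + 1 = 0"
    and dim: "\<forall>X\<in>S. F2_subspace_dim X k"
    and bij: "bij_betw (\<lambda>(X, (a, b), j). (a / b) ^ (2 ^ j))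
      (SIGMA X:S. distinct_nonzero_pairs X \<times> {..<m}) (UNIV - {0, 1})"
  shows "steiner_structure k {frobenius_twist c j X | X c j. X \<in> S \<and> c \<noteq> 0 \<and> j < m}"
    (is "steiner_structure k ?T")
  unfolding steiner_structure_def
proof (intro conjI ballI allI impI)
  fix Y
  assume "Y \<in> ?T"
  then show "F2_subspace_dim Y k"
    using dim F2_subspace_dim_frobenius_twist[OF char2] by blast
next
  fix W :: "'a set"
  assume W: "F2_subspace_dim W 2"
  obtain x y where xy: "x \<in> W" "y \<in> W" "x \<noteq> 0" "y \<noteq> 0" "x \<noteq> y"
    and spans: "\<And>Y. F2_subspace Y \<Longrightarrow> x \<in> Y \<Longrightarrow> y \<in> Y \<Longrightarrow> W \<subseteq> Y"
    using F2_subspace_dim_2_spanned[OF char2 W] by blast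
  let ?Q = "SIGMA X:S. distinct_nonzero_pairs X \<times> {..<m}"
  have contains: "W \<subseteq> frobenius_twist c j X \<longleftrightarrow>
      (\<exists>(a, b)\<in>distinct_nonzero_pairs X. (a / b) ^ (2 ^ j) = y / x \<and> c = x / b ^ (2 ^ j))"
    if "X \<in> S" "c \<noteq> 0" for X c j
  proof -
    have "F2_subspace (frobenius_twist c j X)"
      using F2_subspace_dim_frobenius_twist[OF char2 \<open>c \<noteq> 0\<close>] dim \<open>X \<in> S\<close>
      unfolding F2_subspace_dim_def by blast
    then have "W \<subseteq> frobenius_twist c j X \<longleftrightarrow> x \<in> frobenius_twist c j X \<and> y \<in> frobenius_twist c j X"
      using spans xy by blast
    then show ?thesis
      using pair_mem_frobenius_twist_iff[OF char2 \<open>c \<noteq> 0\<close> xy(3-5)] by simp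
  qed
  show "\<exists>!Y. Y \<in> ?T \<and> W \<subseteq> Y"
  proof (rule ex_ex1I)
    have "y / x \<in> (\<lambda>(X, (a, b), j). (a / b) ^ (2 ^ j)) ` ?Q"
      using bij xy unfolding bij_betw_def by simp
    then obtain X a b j where q: "(X, (a, b), j) \<in> ?Q" and "(a / b) ^ (2 ^ j) = y / x"
      by auto
    moreover have "x / b ^ (2 ^ j) \<noteq> 0"
      using q xy unfolding distinct_nonzero_pairs_def by auto
    ultimately have "W \<subseteq> frobenius_twist (x / b ^ (2 ^ j)) j X"
      using contains by auto
    with q \<open>x / b ^ (2 ^ j) \<noteq> 0\<close> show "\<exists>Y. Y \<in> ?T \<and> W \<subseteq> Y"
      by blast
  next
    fix Y1 Y2
    assume "Y1 \<in> ?T \<and> W \<subseteq> Y1" "Y2 \<in> ?T \<and> W \<subseteq> Y2"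
    then obtain X1 c1 j1 X2 c2 j2 where
      Y: "Y1 = frobenius_twist c1 j1 X1" "Y2 = frobenius_twist c2 j2 X2"
      and "X1 \<in> S" "c1 \<noteq> 0" "j1 < m" "X2 \<in> S" "c2 \<noteq> 0" "j2 < m"
      and "W \<subseteq> Y1" "W \<subseteq> Y2"
      by blast
    then obtain a1 b1 a2 b2 where
      q1: "(X1, (a1, b1), j1) \<in> ?Q" "(a1 / b1) ^ (2 ^ j1) = y / x" "c1 = x / b1 ^ (2 ^ j1)"
      and q2: "(X2, (a2, b2), j2) \<in> ?Q" "(a2 / b2) ^ (2 ^ j2) = y / x" "c2 = x / b2 ^ (2 ^ j2)"
      using contains by fastforce
    have "(X1, (a1, b1), j1) = (X2, (a2, b2), j2)"
      using inj_onD[OF bij_betw_imp_inj_on[OF bij] _ q1(1) q2(1)] q1(2) q2(2) by simp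
    then show "Y1 = Y2"
      unfolding Y using q1(3) q2(3) by simp
  qed
qed

lemma finite_field_pow_card_minus_one:
  fixes z :: "'a::{field,finite}"
  assumes "z \<noteq> 0"
  shows "z ^ (CARD('a) - 1) = 1"
proof -
  let ?U = "UNIV - {0::'a}"
  have "bij_betw ((*) z) ?U ?U"
    by (rule bij_betw_byWitness[where f' = "\<lambda>w. w / z"]) (use assms in auto)
  then have "(\<Prod>w\<in>?U. z * w) = (\<Prod>w\<in>?U. w)"
    by (rule prod.reindex_bij_betw)
  then have "z ^ card ?U * (\<Prod>w\<in>?U. w) = 1 * (\<Prod>w\<in>?U. w)"
    by (simp add: prod.distrib)
  moreover have "(\<Prod>w\<in>?U. w) \<noteq> 0"
    by simp
  ultimately show ?thesis
    by (simp add: card_Diff_singleton)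
qed

locale binary_field =
  fixes \<alpha> :: "'a::{field,finite}" and n :: nat
  assumes card_field: "CARD('a) = 2 ^ n"
    and char2: "(1::'a) + 1 = 0"
    and primitive: "primitive_element \<alpha>"
begin

lemma n_pos: "n > 0"
proof -
  have "card {0, 1::'a} \<le> CARD('a)"
    by (rule card_mono) simp_all
  then show ?thesis
    using card_field by (cases n) simp_all
qed

lemma mersenne_pos: "(2::nat) ^ n - 1 > 0"
  using one_less_power[of "2::nat" n] n_pos by simp

lemma alpha_nonzero: "\<alpha> \<noteq> 0"
  using primitive unfolding primitive_element_def by blast

lemma alpha_pow_mod: "\<alpha> ^ u = \<alpha> ^ (u mod (2 ^ n - 1))"
proof -
  let ?N = "(2::nat) ^ n - 1"
  have "\<alpha> ^ u = (\<alpha> ^ ?N) ^ (u div ?N) * \<alpha> ^ (u mod ?N)"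
    by (simp flip: power_mult power_add)
  moreover have "\<alpha> ^ ?N = 1"
    using finite_field_pow_card_minus_one[OF alpha_nonzero] card_field by simp
  ultimately show ?thesis
    by simp
qed

lemma alpha_pow_eq_iff: "\<alpha> ^ u = \<alpha> ^ v \<longleftrightarrow> u mod (2 ^ n - 1) = v mod (2 ^ n - 1)"
proof
  let ?N = "(2::nat) ^ n - 1"
  have "(\<lambda>i. \<alpha> ^ i) ` {..<?N} = UNIV - {0}"
  proof
    show "(\<lambda>i. \<alpha> ^ i) ` {..<?N} \<subseteq> UNIV - {0}"
      using alpha_nonzero by auto
    show "UNIV - {0} \<subseteq> (\<lambda>i. \<alpha> ^ i) ` {..<?N}"
    proof
      fix x :: 'a
      assume "x \<in> UNIV - {0}"
      then obtain i where "x = \<alpha> ^ i"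
        using primitive unfolding primitive_element_def by auto
      moreover have "i mod ?N < ?N"
        using mersenne_pos by simp
      ultimately show "x \<in> (\<lambda>i. \<alpha> ^ i) ` {..<?N}"
        using alpha_pow_mod[of i] by blast
    qed
  qed
  moreover have "card (UNIV - {0::'a}) = ?N"
    using card_field by (simp add: card_Diff_singleton)
  ultimately have inj: "inj_on (\<lambda>i. \<alpha> ^ i) {..<?N}"
    by (intro eq_card_imp_inj_on) simp_all
  assume "\<alpha> ^ u = \<alpha> ^ v"
  then have "\<alpha> ^ (u mod ?N) = \<alpha> ^ (v mod ?N)"
    by (simp only: alpha_pow_mod[symmetric])
  then show "u mod ?N = v mod ?N"
    using inj_onD[OF inj] mersenne_pos by simp
next
  assume "u mod (2 ^ n - 1) = v mod (2 ^ n - 1)"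
  then show "\<alpha> ^ u = \<alpha> ^ v"
    by (subst (1 2) alpha_pow_mod) simp
qed

lemma dlog_alpha_pow: "dlog n \<alpha> (\<alpha> ^ u) = u mod (2 ^ n - 1)"
  unfolding dlog_def
proof (rule the_equality)
  show "u mod (2 ^ n - 1) < 2 ^ n - 1 \<and> \<alpha> ^ (u mod (2 ^ n - 1)) = \<alpha> ^ u"
    using mersenne_pos alpha_pow_mod[of u] by simp
next
  fix i
  assume "i < 2 ^ n - 1 \<and> \<alpha> ^ i = \<alpha> ^ u"
  then show "i = u mod (2 ^ n - 1)"
    by (auto simp: alpha_pow_eq_iff)
qed

lemma alpha_pow_dlog:
  assumes "x \<noteq> 0"
  shows "\<alpha> ^ dlog n \<alpha> x = x"
proof -
  obtain i where "x = \<alpha> ^ i"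
    using primitive assms unfolding primitive_element_def by metis
  then show ?thesis
    using alpha_pow_mod[of i] by (simp add: dlog_alpha_pow)
qed

lemma dlog_power:
  assumes "z \<noteq> 0"
  shows "dlog n \<alpha> (z ^ m) = (dlog n \<alpha> z * m) mod (2 ^ n - 1)"
proof -
  have "z ^ m = \<alpha> ^ (dlog n \<alpha> z * m)"
    using alpha_pow_dlog[OF assms] by (simp add: power_mult)
  then show ?thesis
    by (simp add: dlog_alpha_pow)
qed

lemma dlog_divide:
  assumes "a \<noteq> 0" "b \<noteq> 0"
  shows "nat ((int (dlog n \<alpha> a) - int (dlog n \<alpha> b)) mod int (2 ^ n - 1)) = dlog n \<alpha> (a / b)"
proof -
  let ?N = "(2::nat) ^ n - 1"
  define u where "u = nat ((int (dlog n \<alpha> a) - int (dlog n \<alpha> b)) mod int ?N)"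
  have "0 \<le> (int (dlog n \<alpha> a) - int (dlog n \<alpha> b)) mod int ?N"
    using mersenne_pos by (intro pos_mod_sign) (simp only: of_nat_0_less_iff)
  then have u: "int u = (int (dlog n \<alpha> a) - int (dlog n \<alpha> b)) mod int ?N"
    by (simp add: u_def)
  then have "int ((u + dlog n \<alpha> b) mod ?N) = int (dlog n \<alpha> a mod ?N)"
    by (simp add: zmod_int mod_add_left_eq)
  then have "\<alpha> ^ (u + dlog n \<alpha> b) = \<alpha> ^ dlog n \<alpha> a"
    by (simp only: of_nat_eq_iff alpha_pow_eq_iff)
  then have "\<alpha> ^ u = a / b"
    using assms by (simp add: power_add alpha_pow_dlog field_simps)
  moreover have "int u < int ?N"
    unfolding u using mersenne_pos by (intro pos_mod_bound) (simp only: of_nat_0_less_iff)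
  then have "u < ?N"
    by (simp only: of_nat_less_iff)
  ultimately have "dlog n \<alpha> (a / b) = u"
    using dlog_alpha_pow[of u] by simp
  then show ?thesis
    unfolding u_def by (rule sym)
qed

lemma coset_diff_set_eq_image:
  "coset_diff_set n \<alpha> X =
    (\<lambda>(a, b). coset_rep n (dlog n \<alpha> (a / b))) ` distinct_nonzero_pairs X"
proof -
  have "coset_diff_set n \<alpha> X = (\<lambda>(a, b). coset_rep n
      (nat ((int (dlog n \<alpha> a) - int (dlog n \<alpha> b)) mod int (2 ^ n - 1)))) ` distinct_nonzero_pairs X"
    unfolding coset_diff_set_def distinct_nonzero_pairs_def by (auto simp: image_def)
  also have "\<dots> = (\<lambda>(a, b). coset_rep n (dlog n \<alpha> (a / b))) ` distinct_nonzero_pairs X"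
  proof (rule image_cong[OF refl], clarify)
    fix a b
    assume "(a, b) \<in> distinct_nonzero_pairs X"
    then have nonzero: "a \<noteq> 0" "b \<noteq> 0"
      unfolding distinct_nonzero_pairs_def by auto
    then show "coset_rep n (nat ((int (dlog n \<alpha> a) - int (dlog n \<alpha> b)) mod int (2 ^ n - 1))) =
        coset_rep n (dlog n \<alpha> (a / b))"
      by (simp only: dlog_divide[OF nonzero])
  qed
  finally show ?thesis .
qed

lemma coset_rep_dlog_frobenius:
  assumes "z \<noteq> 0"
  shows "coset_rep n (dlog n \<alpha> (z ^ (2 ^ j))) = coset_rep n (dlog n \<alpha> z)"
  unfolding dlog_power[OF assms] by (rule coset_rep_mult_pow2[OF n_pos])

lemma inj_on_coset_rep_dlog:
  assumes "F2_subspace_dim X k" and "coset_complete n \<alpha> k X"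
  shows "inj_on (\<lambda>(a, b). coset_rep n (dlog n \<alpha> (a / b))) (distinct_nonzero_pairs X)"
proof (rule eq_card_imp_inj_on)
  have "card (distinct_nonzero_pairs X) = (2 ^ k - 1) * (2 ^ k - 2)"
    using assms(1) unfolding F2_subspace_dim_def F2_subspace_def
    by (simp add: card_distinct_nonzero_pairs)
  with assms(2) show "card ((\<lambda>(a, b). coset_rep n (dlog n \<alpha> (a / b))) ` distinct_nonzero_pairs X) =
      card (distinct_nonzero_pairs X)"
    unfolding coset_complete_def coset_diff_set_eq_image by simp
qed simp

lemma frobenius_pow_card: "(z::'a) ^ (2 ^ n) = z"
proof (cases "z = 0")
  case False
  then have "z ^ (2 ^ n - 1) = 1"
    using finite_field_pow_card_minus_one card_field by fastforce
  then show ?thesis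
    using power_Suc[of z "2 ^ n - 1"] by simp
qed (simp add: n_pos)

lemma frobenius_conjugates_distinct:
  fixes z :: 'a
  assumes "prime n" and "z \<noteq> 0" "z \<noteq> 1"
    and "j < n" "j' < n" and "z ^ (2 ^ j) = z ^ (2 ^ j')"
  shows "j = j'"
proof -
  txt \<open>The t with z^(2^t) = z are closed under subtraction and contain n; so a period 0 < t < n
    would give gcd t n = 1 as a period, i.e. z^2 = z.\<close>
  let ?fixed = "\<lambda>t. z ^ (2 ^ t) = z"
  have shift: "?fixed (b - a)" if "a \<le> b" "z ^ (2 ^ a) = z ^ (2 ^ b)" for a b
  proof -
    have "(z ^ (2 ^ (b - a))) ^ (2 ^ a) = z ^ (2 ^ b)"
      using \<open>a \<le> b\<close> by (simp flip: power_mult power_add)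
    also have "\<dots> = z ^ (2 ^ a)"
      using that(2) by simp
    finally show ?thesis
      by (rule char2_pow2_inj[OF char2])
  qed
  have no_period: False if "0 < t" "t < n" "?fixed t" for t
  proof -
    have "coprime t n"
      using \<open>prime n\<close> that by (simp add: prime_imp_coprime nat_dvd_not_less coprime_commute)
    moreover have "?fixed (gcd t n)"
      using gcd_mem_if_diff_closed[of ?fixed] shift \<open>?fixed t\<close> frobenius_pow_card
      by simp
    ultimately have "z * z = z * 1"
      by (simp add: power2_eq_square)
    with assms(2,3) show False
      by simp
  qed
  show ?thesis
  proof (rule linorder_cases[of j j'])
    assume "j < j'"
    moreover have "j' - j < n"
      using \<open>j' < n\<close> by simp
    ultimately show ?thesis
      using shift[of j j'] no_period[of "j' - j"] assms(6) by simp
  next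
    assume "j' < j"
    moreover have "j - j' < n"
      using \<open>j < n\<close> by simp
    ultimately show ?thesis
      using shift[of j' j] no_period[of "j - j'"] assms(6) by simp
  qed
qed

lemma inj_on_frobenius_quotient:
  assumes "prime n"
    and complete: "\<forall>X\<in>S. F2_subspace_dim X k \<and> coset_complete n \<alpha> k X"
    and disjoint: "\<forall>X\<in>S. \<forall>Y\<in>S. X \<noteq> Y \<longrightarrow> coset_diff_set n \<alpha> X \<inter> coset_diff_set n \<alpha> Y = {}"
  shows "inj_on (\<lambda>(X, (a, b), j). (a / b) ^ (2 ^ j)) (SIGMA X:S. distinct_nonzero_pairs X \<times> {..<n})"
proof -
  have same: "X = X' \<and> (a, b) = (a', b') \<and> j = j'"
    if X: "X \<in> S" "(a, b) \<in> distinct_nonzero_pairs X" "j < n"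
      and X': "X' \<in> S" "(a', b') \<in> distinct_nonzero_pairs X'" "j' < n"
      and eq: "(a / b) ^ (2 ^ j) = (a' / b') ^ (2 ^ j')"
    for X a b j X' a' b' j'
  proof -
    have "a / b \<noteq> 0" "a / b \<noteq> 1" "a' / b' \<noteq> 0"
      using X X' unfolding distinct_nonzero_pairs_def by auto
    have "coset_rep n (dlog n \<alpha> (a / b)) = coset_rep n (dlog n \<alpha> ((a / b) ^ (2 ^ j)))"
      using \<open>a / b \<noteq> 0\<close> by (rule coset_rep_dlog_frobenius[symmetric])
    also have "\<dots> = coset_rep n (dlog n \<alpha> ((a' / b') ^ (2 ^ j')))"
      by (simp only: eq)
    also have "\<dots> = coset_rep n (dlog n \<alpha> (a' / b'))"
      using \<open>a' / b' \<noteq> 0\<close> by (rule coset_rep_dlog_frobenius)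
    finally have rep_eq: "coset_rep n (dlog n \<alpha> (a / b)) = coset_rep n (dlog n \<alpha> (a' / b'))" .
    have "coset_rep n (dlog n \<alpha> (a / b)) \<in> coset_diff_set n \<alpha> X"
      unfolding coset_diff_set_eq_image by (rule image_eqI[OF _ X(2)]) simp
    moreover have "coset_rep n (dlog n \<alpha> (a' / b')) \<in> coset_diff_set n \<alpha> X'"
      unfolding coset_diff_set_eq_image by (rule image_eqI[OF _ X'(2)]) simp
    ultimately have "coset_diff_set n \<alpha> X \<inter> coset_diff_set n \<alpha> X' \<noteq> {}"
      unfolding rep_eq by blast
    then have "X = X'"
      using disjoint X(1) X'(1) by blast
    moreover have "(a, b) = (a', b')"
    proof (rule inj_onD[OF inj_on_coset_rep_dlog _ X(2)])
      show "F2_subspace_dim X k" "coset_complete n \<alpha> k X"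
        using complete X(1) by auto
      show "(\<lambda>(a, b). coset_rep n (dlog n \<alpha> (a / b))) (a, b) =
          (\<lambda>(a, b). coset_rep n (dlog n \<alpha> (a / b))) (a', b')"
        using rep_eq by simp
      show "(a', b') \<in> distinct_nonzero_pairs X"
        using X'(2) \<open>X = X'\<close> by simp
    qed
    moreover from this have "j = j'"
      using frobenius_conjugates_distinct[OF \<open>prime n\<close> \<open>a / b \<noteq> 0\<close> \<open>a / b \<noteq> 1\<close> \<open>j < n\<close> \<open>j' < n\<close>] eq
      by simp
    ultimately show ?thesis
      by simp
  qed
  show ?thesis
  proof (rule inj_onI)
    fix q q'
    assume "q \<in> (SIGMA X:S. distinct_nonzero_pairs X \<times> {..<n})"
      "q' \<in> (SIGMA X:S. distinct_nonzero_pairs X \<times> {..<n})"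
      and "(\<lambda>(X, (a, b), j). (a / b) ^ (2 ^ j)) q = (\<lambda>(X, (a, b), j). (a / b) ^ (2 ^ j)) q'"
    moreover obtain X a b j X' a' b' j' where "q = (X, (a, b), j)" "q' = (X', (a', b'), j')"
      by (metis prod.exhaust)
    ultimately show "q = q'"
      using same[of X a b j X' a' b' j'] by simp
  qed
qed

lemma bij_betw_frobenius_quotient:
  assumes "prime n"
    and complete: "\<forall>X\<in>S. F2_subspace_dim X k \<and> coset_complete n \<alpha> k X"
    and disjoint: "\<forall>X\<in>S. \<forall>Y\<in>S. X \<noteq> Y \<longrightarrow> coset_diff_set n \<alpha> X \<inter> coset_diff_set n \<alpha> Y = {}"
    and count: "card S * ((2 ^ k - 1) * (2 ^ k - 2) * n) = 2 ^ n - 2"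
  shows "bij_betw (\<lambda>(X, (a, b), j). (a / b) ^ (2 ^ j))
    (SIGMA X:S. distinct_nonzero_pairs X \<times> {..<n}) (UNIV - {0, 1})"
proof -
  let ?Q = "SIGMA X:S. distinct_nonzero_pairs X \<times> {..<n}"
  let ?f = "\<lambda>(X, (a, b), j). (a / b) ^ (2 ^ j)"
  have inj: "inj_on ?f ?Q"
    by (rule inj_on_frobenius_quotient[OF assms(1-3)])
  have "(a / b) ^ (2 ^ j) \<in> UNIV - {0, 1}" if "(X, (a, b), j) \<in> ?Q" for X a b j
  proof -
    from that have "a \<noteq> 0" "b \<noteq> 0" "a \<noteq> b"
      unfolding distinct_nonzero_pairs_def by auto
    moreover have "a / b = 1" if "(a / b) ^ (2 ^ j) = 1 ^ (2 ^ j)"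
      using that by (rule char2_pow2_inj[OF char2])
    ultimately show ?thesis
      by auto
  qed
  then have "?f ` ?Q \<subseteq> UNIV - {0, 1}"
    by auto
  moreover have "card (?f ` ?Q) = card (UNIV - {0, 1::'a})"
  proof -
    have "card ?Q = (\<Sum>X\<in>S. card (distinct_nonzero_pairs X \<times> {..<n}))"
      by (rule card_SigmaI) simp_all
    also have "\<dots> = card S * ((2 ^ k - 1) * (2 ^ k - 2) * n)"
      using complete
      by (simp add: card_cartesian_product card_distinct_nonzero_pairs F2_subspace_dim_def F2_subspace_def)
    also have "\<dots> = card (UNIV - {0, 1::'a})"
      using count card_field by (simp add: card_Diff_subset)
    finally show ?thesis
      using card_image[OF inj] by simp
  qed
  ultimately show ?thesis
    using inj unfolding bij_betw_def by (simp add: card_subset_eq)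
qed

end

theorem theorem2:
  fixes \<alpha> :: "'a::{field,finite}" and n k :: nat
  assumes "prime n"
    and "CARD('a) = 2 ^ n"
    and "(1::'a) + 1 = 0"
    and "primitive_element \<alpha>"
    and "k \<ge> 2"
    and "\<exists>\<S>. card \<S> * ((2 ^ k - 1) * (2 ^ k - 2) * n) = 2 ^ n - 2
              \<and> (\<forall>X\<in>\<S>. F2_subspace_dim X k \<and> coset_complete n \<alpha> k X)
              \<and> (\<forall>X\<in>\<S>. \<forall>Y\<in>\<S>. X \<noteq> Y \<longrightarrow> coset_diff_set n \<alpha> X \<inter> coset_diff_set n \<alpha> Y = {})"
  shows "\<exists>\<S>::'a set set. steiner_structure k \<S>"
proof -
  interpret binary_field \<alpha> n
    using assms(2-4) by unfold_locales
  obtain S :: "'a set set" where count: "card S * ((2 ^ k - 1) * (2 ^ k - 2) * n) = 2 ^ n - 2"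
    and complete: "\<forall>X\<in>S. F2_subspace_dim X k \<and> coset_complete n \<alpha> k X"
    and disjoint: "\<forall>X\<in>S. \<forall>Y\<in>S. X \<noteq> Y \<longrightarrow> coset_diff_set n \<alpha> X \<inter> coset_diff_set n \<alpha> Y = {}"
    using assms(6) by blast
  have "bij_betw (\<lambda>(X, (a, b), j). (a / b) ^ (2 ^ j))
      (SIGMA X:S. distinct_nonzero_pairs X \<times> {..<n}) (UNIV - {0, 1})"
    by (rule bij_betw_frobenius_quotient[OF assms(1) complete disjoint count])
  then have "steiner_structure k {frobenius_twist c j X | X c j. X \<in> S \<and> c \<noteq> 0 \<and> j < n}"
    using steiner_structure_frobenius_twists[OF assms(3)] complete by blast
  then show ?thesis
    by blast
qed

end
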